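(* Let $g_n$ ($n\ge0$) denote the parity of the number of digits equal to $1$ in the negabinary representation of $n$, and for $k\ge0$ let $G_k$ be the finite word $g_0g_1\cdots g_{2^k-1}$ of the first $2^k$ terms. Then $G_0=0$, and: for every even $k\ge0$, $G_{k+1}=G_kF_k$ (concatenation), where $F_k$ is obtained from $G_k$ by replacing every letter $x$ by $1-x$; for every odd $k\ge1$, $G_{k+1}=G_kH_k$, where $H_k$ is obtained from $G_k$ by replacing each of its last $\frac{2}{3}(2^{k-1}-1)$ letters $x$ by $1-x$ and leaving the other letters unchanged.
   Context: Every nonnegative integer $n$ has a unique representation $n=\sum_{i\ge0} d_i(-2)^i$ with digits $d_i\in\{0,1\}$, only finitely many nonzero; this is the negabinary representation. Parity means the number modulo $2$, so $g_n\in\{0,1\}$. *)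

theory Defs
  imports Main
begin

definition negabinary :: "nat \<Rightarrow> nat list" where
  "negabinary n = (THE ds. set ds \<subseteq> {0, 1} \<and> (ds = [] \<or> last ds \<noteq> 0) \<and>
      int n = (\<Sum>i<length ds. int (ds ! i) * (-2) ^ i))"

definition g :: "nat \<Rightarrow> nat" where
  "g n = (count_list (negabinary n) 1) mod 2"

definition G :: "nat \<Rightarrow> nat list" where
  "G k = map g [0..<2 ^ k]"

end

theory Submission imports Defs begin

text \<open>Writing \<open>W\<^sub>k = [nega_min k, nega_max k]\<close> for the integers with at most \<open>k\<close> negabinary
  digits (an interval of length \<open>2^k\<close> containing 0), adding \<open>(-2)^k\<close> to \<open>r \<in> W\<^sub>k\<close> just sets
  digit \<open>k\<close>, raising the digit count by one. Since \<open>2^k\<close> is \<open>(-2)^k\<close> for even \<open>k\<close> and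
  \<open>(-2)^k + (-2)^(k+1)\<close> for odd \<open>k\<close>, adding \<open>2^k\<close> to \<open>r \<in> W\<^sub>k\<close> adds one resp. two ones.
  For \<open>0 \<le> n < 2^k\<close> either \<open>n \<in> W\<^sub>k\<close>, or \<open>n = r + 2^k\<close> and \<open>n + 2^k = r + 2^(k+1)\<close> with
  \<open>r \<in> W\<^sub>k\<close>; in the latter case the counts of \<open>n\<close> and \<open>n + 2^k\<close> always differ by an odd
  number. So \<open>g (2^k + n) = g n\<close> exactly when \<open>k\<close> is odd and \<open>n \<le> nega_max k\<close>, and for odd
  \<open>k\<close> the number of remaining \<open>n < 2^k\<close> is \<open>-nega_min k = 2(2^(k-1) - 1)/3\<close>.\<close>

function negadigits :: "int \<Rightarrow> nat list" where
  "negadigits r = (if r = 0 then [] else nat (r mod 2) # negadigits (- (r div 2)))"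
  by auto
termination
  by (relation "measure (\<lambda>r. nat (2 * \<bar>r\<bar> - (if r > 0 then 1 else 0)))") (auto, presburger)

declare negadigits.simps[simp del]

lemma negadigits_0[simp]: "negadigits 0 = []"
  by (simp add: negadigits.simps)

fun negaval :: "nat list \<Rightarrow> int" where
  "negaval [] = 0"
| "negaval (d # ds) = int d - 2 * negaval ds"

definition canonical_digits :: "nat list \<Rightarrow> bool" where
  "canonical_digits ds \<longleftrightarrow> set ds \<subseteq> {0, 1} \<and> (ds = [] \<or> last ds \<noteq> 0)"

lemma negaval_eq_sum: "negaval ds = (\<Sum>i<length ds. int (ds ! i) * (-2) ^ i)"
proof (induction ds)
  case (Cons d ds)
  have "(\<Sum>i<length (d # ds). int ((d # ds) ! i) * (-2) ^ i)
      = int d + (\<Sum>i<length ds. int (ds ! i) * (-2) ^ Suc i)"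
    by (simp add: sum.lessThan_Suc_shift del: sum.lessThan_Suc)
  also have "\<dots> = int d - 2 * (\<Sum>i<length ds. int (ds ! i) * (-2) ^ i)"
    by (simp add: sum_distrib_left sum_negf mult_ac)
  finally show ?case using Cons by simp
qed simp

lemma negaval_negadigits: "negaval (negadigits r) = r"
  by (induction r rule: negadigits.induct) (subst negadigits.simps, auto)

lemma canonical_negadigits: "canonical_digits (negadigits r)"
proof (induction r rule: negadigits.induct)
  case (1 r)
  show ?case
  proof (cases "r = 0")
    case False
    then have "negadigits (- (r div 2)) = [] \<Longrightarrow> r = 1"
      using negaval_negadigits[of "- (r div 2)"] by auto
    with 1 False show ?thesis
      by (subst negadigits.simps) (auto simp: canonical_digits_def)
  qed (simp add: canonical_digits_def)
qed

lemma negadigits_negaval: "canonical_digits ds \<Longrightarrow> negadigits (negaval ds) = ds"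
proof (induction ds)
  case (Cons d ds)
  have d: "d = 0 \<or> d = 1" and ds: "canonical_digits ds"
    using Cons.prems by (auto simp: canonical_digits_def split: if_splits)
  have "negaval (d # ds) \<noteq> 0"
  proof
    assume "negaval (d # ds) = 0"
    then have "int d = 2 * negaval ds" by simp
    with d have "d = 0" "negaval ds = 0" by presburger+
    with Cons.IH ds have "ds = []" by simp
    with \<open>d = 0\<close> Cons.prems show False by (simp add: canonical_digits_def)
  qed
  moreover have "(int d - 2 * x) mod 2 = int d" "- ((int d - 2 * x) div 2) = x" for x
    using d by presburger+
  ultimately show ?case
    using Cons.IH ds by (subst negadigits.simps) simp
qed simp

lemma negabinary_eq_negadigits: "negabinary n = negadigits (int n)"
  unfolding negabinary_def
proof (rule the_equality)
  show "set (negadigits (int n)) \<subseteq> {0, 1} \<and> (negadigits (int n) = [] \<or> last (negadigits (int n)) \<noteq> 0)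
      \<and> int n = (\<Sum>i<length (negadigits (int n)). int (negadigits (int n) ! i) * (-2) ^ i)"
    using canonical_negadigits negaval_negadigits
    by (simp add: canonical_digits_def negaval_eq_sum[symmetric])
next
  fix ds assume "set ds \<subseteq> {0, 1} \<and> (ds = [] \<or> last ds \<noteq> 0)
      \<and> int n = (\<Sum>i<length ds. int (ds ! i) * (-2) ^ i)"
  then show "ds = negadigits (int n)"
    using negadigits_negaval by (simp add: canonical_digits_def negaval_eq_sum[symmetric])
qed

definition nega_ones :: "int \<Rightarrow> nat" where
  "nega_ones r = count_list (negadigits r) 1"

lemma g_eq_nega_ones: "g n = nega_ones (int n) mod 2"
  by (simp add: g_def nega_ones_def negabinary_eq_negadigits)

lemma nega_ones_digit:
  assumes "d = 0 \<or> d = 1"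
  shows "nega_ones (int d - 2 * x) = d + nega_ones x"
proof (cases "d = 0 \<and> x = 0")
  case False
  have "negadigits x = [] \<Longrightarrow> x = 0" using negaval_negadigits[of x] by auto
  then have "canonical_digits (d # negadigits x)"
    using assms False canonical_negadigits[of x] by (auto simp: canonical_digits_def)
  then have "negadigits (int d - 2 * x) = d # negadigits x"
    using negadigits_negaval negaval_negadigits by (metis negaval.simps(2))
  with assms show ?thesis by (auto simp: nega_ones_def)
qed (simp add: nega_ones_def)

definition nega_max :: "nat \<Rightarrow> int" where
  "nega_max k = (\<Sum>i<k. if even i then 2 ^ i else 0)"

definition nega_min :: "nat \<Rightarrow> int" where
  "nega_min k = - (\<Sum>i<k. if odd i then 2 ^ i else 0)"

lemma nega_max_Suc: "nega_max (Suc k) = nega_max k + (if even k then 2 ^ k else 0)"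
  by (simp add: nega_max_def)

lemma nega_min_Suc: "nega_min (Suc k) = nega_min k - (if odd k then 2 ^ k else 0)"
  by (simp add: nega_min_def)

lemma nega_max_Suc_low: "nega_max (Suc k) = 1 - 2 * nega_min k"
  by (simp add: nega_max_def nega_min_def sum.lessThan_Suc_shift sum_distrib_left if_distrib
      cong: if_cong del: sum.lessThan_Suc)

lemma nega_min_Suc_low: "nega_min (Suc k) = - 2 * nega_max k"
  by (simp add: nega_max_def nega_min_def sum.lessThan_Suc_shift sum_distrib_left if_distrib
      cong: if_cong del: sum.lessThan_Suc flip: sum_negf)

lemma nega_max_nonneg: "0 \<le> nega_max k"
  by (simp add: nega_max_def sum_nonneg)

lemma nega_min_nonpos: "nega_min k \<le> 0"
  by (simp add: nega_min_def sum_nonneg)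

lemma nega_max_minus_nega_min: "nega_max k - nega_min k = 2 ^ k - 1"
  by (induction k) (simp add: nega_max_def nega_min_def, simp add: nega_max_Suc nega_min_Suc)

lemma three_nega_min: "3 * nega_min k = 2 - 2 ^ (if odd k then k else Suc k)"
  by (induction k) (simp add: nega_min_def, simp add: nega_min_Suc)

lemma nega_window_Suc:
  assumes "r \<in> {nega_min k..nega_max k}"
  shows "r \<in> {nega_min (Suc k)..nega_max (Suc k)}"
proof -
  have "nega_min (Suc k) \<le> nega_min k" "nega_max k \<le> nega_max (Suc k)"
    by (simp_all add: nega_max_Suc nega_min_Suc)
  with assms show ?thesis by simp
qed

lemma add_power_in_nega_window:
  assumes "r \<in> {nega_min k..nega_max k}"
  shows "r + (-2) ^ k \<in> {nega_min (Suc k)..nega_max (Suc k)}"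
proof -
  have p: "(0::int) < 2 ^ k" by simp
  from assms have r: "nega_min k \<le> r" "r \<le> nega_max k" by simp_all
  show ?thesis
  proof (cases "even k")
    case True
    have "nega_min k \<le> r + 2 ^ k" "r + 2 ^ k \<le> nega_max k + 2 ^ k" using r p by linarith+
    with True show ?thesis by (simp add: nega_max_Suc nega_min_Suc)
  next
    case False
    have "nega_min k - 2 ^ k \<le> r - 2 ^ k" "r - 2 ^ k \<le> nega_max k" using r p by linarith+
    with False show ?thesis by (simp add: nega_max_Suc nega_min_Suc)
  qed
qed

lemma nega_ones_add_power:
  "r \<in> {nega_min k..nega_max k} \<Longrightarrow> nega_ones (r + (-2) ^ k) = nega_ones r + 1"
proof (induction k arbitrary: r)
  case 0
  then show ?case using nega_ones_digit[of 1 0] by (simp add: nega_max_def nega_min_def)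
next
  case (Suc k)
  define d where "d = nat (r mod 2)"
  define r' where "r' = - (r div 2)"
  have d: "d = 0 \<or> d = 1" and r: "r = int d - 2 * r'"
    unfolding d_def r'_def by auto
  have W: "r' \<in> {nega_min k..nega_max k}"
    using Suc.prems d unfolding r nega_max_Suc_low nega_min_Suc_low by auto
  have shift: "r + (-2) ^ Suc k = int d - 2 * (r' + (-2) ^ k)"
    unfolding r by simp
  have "nega_ones (r + (-2) ^ Suc k) = d + nega_ones (r' + (-2) ^ k)"
    unfolding shift by (rule nega_ones_digit[OF d])
  also have "\<dots> = d + nega_ones r' + 1"
    using Suc.IH[OF W] by simp
  also have "\<dots> = nega_ones r + 1"
    unfolding r nega_ones_digit[OF d] ..
  finally show ?case .
qed

lemma nega_ones_add_two_power:
  assumes "r \<in> {nega_min k..nega_max k}"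
  shows "nega_ones (r + 2 ^ k) = nega_ones r + (if even k then 1 else 2)"
proof (cases "even k")
  case True
  then show ?thesis using nega_ones_add_power[OF assms] by simp
next
  case False
  then have shift: "r + 2 ^ k = (r + (-2) ^ k) + (-2) ^ Suc k" by simp
  have "nega_ones (r + 2 ^ k) = nega_ones (r + (-2) ^ k) + 1"
    unfolding shift by (rule nega_ones_add_power[OF add_power_in_nega_window[OF assms]])
  also have "\<dots> = nega_ones r + 2"
    using nega_ones_add_power[OF assms] by simp
  finally show ?thesis using False by simp
qed

lemma nega_ones_upper_half_parity:
  assumes "0 \<le> x" "x < 2 ^ k"
  shows "even (nega_ones (x + 2 ^ k) + nega_ones x) \<longleftrightarrow> odd k \<and> x \<le> nega_max k"
proof (cases "x \<le> nega_max k")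
  case True
  then have "x \<in> {nega_min k..nega_max k}" using assms nega_min_nonpos[of k] by simp
  from nega_ones_add_two_power[OF this] True show ?thesis by simp
next
  case False
  define r where "r = x - 2 ^ k"
  have W: "r \<in> {nega_min k..nega_max k}"
    using False assms nega_max_nonneg[of k] nega_max_minus_nega_min[of k] unfolding r_def by simp
  have x: "r + 2 ^ k = x" and x_shift: "r + 2 ^ Suc k = x + 2 ^ k"
    unfolding r_def by simp_all
  have "nega_ones x = nega_ones r + (if even k then 1 else 2)"
    using nega_ones_add_two_power[OF W] unfolding x .
  moreover have "nega_ones (x + 2 ^ k) = nega_ones r + (if even (Suc k) then 1 else 2)"
    using nega_ones_add_two_power[OF nega_window_Suc[OF W]] unfolding x_shift .
  ultimately show ?thesis using False by auto
qed

lemma g_upper_half: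
  assumes "n < 2 ^ k"
  shows "g (2 ^ k + n) = (if odd k \<and> int n \<le> nega_max k then g n else 1 - g n)"
proof -
  have "int n < 2 ^ k" using assms by (metis of_nat_less_iff of_nat_numeral of_nat_power)
  from nega_ones_upper_half_parity[OF _ this] have
    "even (nega_ones (int (2 ^ k + n)) + nega_ones (int n)) \<longleftrightarrow> odd k \<and> int n \<le> nega_max k"
    by (simp add: add.commute)
  moreover have "a mod 2 = (if even (a + b) then b mod 2 else 1 - b mod 2)" for a b :: nat
    by presburger
  ultimately show ?thesis unfolding g_eq_nega_ones by presburger
qed

lemma G_Suc: "G (Suc k) = G k @ map (\<lambda>n. g (2 ^ k + n)) [0..<2 ^ k]"
proof -
  have "[0..<2 ^ Suc k] = [0..<2 ^ k] @ map (\<lambda>n. 2 ^ k + n) [0..<2 ^ k]"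
    using upt_add_eq_append[of 0 "2 ^ k" "2 ^ k"] map_add_upt[of "2 ^ k" "2 ^ k"]
    by (simp add: mult_2 add.commute)
  then show ?thesis unfolding G_def by simp
qed

lemma unflipped_prefix_length:
  assumes "odd k"
  shows "int (2 ^ k - 2 * (2 ^ (k - 1) - 1) div 3) = nega_max k + 1"
proof -
  define m :: nat where "m = 2 * (2 ^ (k - 1) - 1) div 3"
  obtain j where j: "k = Suc j" using assms by (cases k) auto
  have "int (2 * (2 ^ (k - 1) - 1)) = - 3 * nega_min k"
    using assms three_nega_min[of k] unfolding j by (simp add: of_nat_diff)
  then have "int m = - 3 * nega_min k div 3"
    unfolding m_def by (simp only: of_nat_div of_nat_numeral)
  then have m: "int m = - nega_min k" by simp
  then have "int m \<le> int (2 ^ k)"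
    using nega_max_minus_nega_min[of k] nega_max_nonneg[of k] by simp
  then have "m \<le> 2 ^ k" by (simp only: of_nat_le_iff)
  with m show ?thesis
    using nega_max_minus_nega_min[of k] unfolding m_def[symmetric] by (simp add: of_nat_diff)
qed

theorem theorem4:
  shows "G 0 = [0] \<and>
    (\<forall>k. even k \<longrightarrow> G (k + 1) = G k @ map (\<lambda>x. 1 - x) (G k)) \<and>
    (\<forall>k. odd k \<longrightarrow>
       G (k + 1) = G k @
         (let m = 2 * (2 ^ (k - 1) - 1) div 3
          in take (2 ^ k - m) (G k) @ map (\<lambda>x. 1 - x) (drop (2 ^ k - m) (G k))))"
proof (intro conjI allI impI)
  show "G 0 = [0]" by (simp add: G_def g_eq_nega_ones nega_ones_def)
next
  fix k :: nat assume "even k"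
  then have "map (\<lambda>n. g (2 ^ k + n)) [0..<2 ^ k] = map (\<lambda>x. 1 - x) (G k)"
    by (simp add: G_def g_upper_half)
  then show "G (k + 1) = G k @ map (\<lambda>x. 1 - x) (G k)"
    by (simp add: G_Suc)
next
  fix k :: nat assume k: "odd k"
  define q :: nat where "q = 2 ^ k - 2 * (2 ^ (k - 1) - 1) div 3"
  have q: "int q = nega_max k + 1" using unflipped_prefix_length[OF k] unfolding q_def .
  have "map (\<lambda>n. g (2 ^ k + n)) [0..<2 ^ k] = take q (G k) @ map (\<lambda>x. 1 - x) (drop q (G k))"
    by (rule nth_equalityI)
      (use q k in \<open>auto simp: G_def nth_append g_upper_half min_def\<close>)
  then show "G (k + 1) = G k @
         (let m = 2 * (2 ^ (k - 1) - 1) div 3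
          in take (2 ^ k - m) (G k) @ map (\<lambda>x. 1 - x) (drop (2 ^ k - m) (G k)))"
    by (simp add: G_Suc q_def Let_def)
qed

end
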